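(* Let $b\ge 1$, and let $\boldsymbol{\Omega}\in\mathbb{R}^{b\times b}$ and $\widetilde{\mathbf r}\in\mathbb{R}^{b}$ be the matrix and vector defined in the context (arising from one inner loop of the GN-BP algorithm). Let $q_1,\dots,q_b\in\{0,1\}$ be a realization of independent $\mathrm{Ber}(p)$ random variables, and set $\mathbf Q=\mathrm{diag}(1-q_1,\dots,1-q_b)$, $\mathbf R=\mathrm{diag}(q_1,\dots,q_b)$. Let $0<\alpha_1<1$ and $\alpha_2=1-\alpha_1$. Define $$\bar{\mathbf r}=(\mathbf Q+\alpha_2\mathbf R)\,\widetilde{\mathbf r},\qquad \bar{\boldsymbol\Omega}=\mathbf Q\boldsymbol\Omega+\alpha_2\mathbf R\boldsymbol\Omega-\alpha_1\mathbf R,$$ and consider the damped mean-message iteration $\mathbf r_{\mathrm d}^{(\tau)}=\bar{\mathbf r}-\bar{\boldsymbol\Omega}\,\mathbf r_{\mathrm d}^{(\tau-1)}$, $\tau=1,2,\dots$. Then $\mathbf r_{\mathrm d}^{(\tau)}$ converges to a unique fixed point $\hat{\mathbf r}_{\mathrm d}=\lim_{\tau\to\infty}\mathbf r_{\mathrm d}^{(\tau)}$ for every initial point $\mathbf r_{\mathrm d}^{(0)}\in\mathbb{R}^b$ if and only if the spectral radius satisfies $\rho(\bar{\boldsymbol\Omega})<1$. Furthermore, in that case $\hat{\mathbf r}_{\mathrm d}=\hat{\mathbf r}_{\mathrm s}:=(\mathbf I+\boldsymbol\Omega)^{-1}\widetilde{\mathbf r}$, i.e., the fixed point coincides with the fixed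 point of the undamped synchronous iteration $\mathbf r_{\mathrm s}^{(\tau)}=\widetilde{\mathbf r}-\boldsymbol\Omega\,\mathbf r_{\mathrm s}^{(\tau-1)}$.
   Context: Setting (one inner loop of Gauss-Newton belief propagation for the linearized model $\mathbf r(\mathbf x^{(\nu)})=\mathbf J(\mathbf x^{(\nu)})\Delta\mathbf x+\mathbf u$): consider the bipartite subgraph of the factor graph consisting of variable nodes $\mathcal V$ (state increments $\Delta x_s$), indirect factor nodes $f_1,\dots,f_m$ (one per indirect measurement with residual $r_i$ and variance $v_i>0$), and the set $\mathcal B$ of edges between them, $b=|\mathcal B|$; $f_i$ has degree $d_i$, and edges are ordered grouped by factor node ($f_1$'s edges first, etc.). Vectors in $\mathbb R^b$ are indexed by edges. Definitions: $\mathbf C=\mathrm{diag}$ of the (nonzero) Jacobian coefficients $C_{\Delta x_p}=\partial h_i/\partial x_p$ on each edge $(f_i,\Delta x_p)$. $\boldsymbol\Pi=\mathrm{blockdiag}(\mathbf\Pi_1,\dots,\mathbf\Pi_m)$ with $\mathbf\Pi_i=\mathbf 1_{d_i\times d_i}-\mathbf I_{d_i}$. $\mathbf D=\mathbf C^{-1}\boldsymbol\Pi\mathbf C$. $\boldsymbol\Gamma\in\{0,1\}^{b\times b}$ has entry $1$ at (edge $(f_i,\Delta x_q)$, edge $(f_j,\Delta x_{q'})$) iff $i\ne j$ and $q=q'$ (both edges incident to the same variable node), and $0$ otherwise. $\mathbf L$ is diagonal with entry on edge $(f_i,\Delta x_q)$ equal to the inverse variance of the message from the singly-connected (direct/virtual/slack)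 factor node attached to $\Delta x_q$; $\mathbf r_{\mathrm b}$ is the vector with entry on edge $(f_i,\Delta x_q)$ equal to the mean of that singly-connected factor node's message to $\Delta x_q$. $\mathbf r_{\mathrm a}$ has entry $r_i$ on every edge of $f_i$. $\hat{\boldsymbol\Sigma}_{\mathrm s}=\mathrm{diag}(\hat{\mathbf v}_{\mathrm s})$, where $\hat{\mathbf v}_{\mathrm s}>0$ is the limit of the factor-to-variable message variances. $\hat{\mathbf A}=\boldsymbol\Gamma\hat{\boldsymbol\Sigma}_{\mathrm s}^{-1}\boldsymbol\Gamma^{\mathrm T}+\mathbf L$, and for a square matrix $\mathbf A$, $\mathfrak D(\mathbf A)=\mathrm{diag}(A_{11},\dots,A_{bb})$. Then $\boldsymbol\Omega=\mathbf D\,(\mathfrak D(\hat{\mathbf A}))^{-1}\boldsymbol\Gamma\hat{\boldsymbol\Sigma}_{\mathrm s}^{-1}$ and $\widetilde{\mathbf r}=\mathbf C^{-1}\mathbf r_{\mathrm a}-\mathbf D\,(\mathfrak D(\hat{\mathbf A}))^{-1}\mathbf L\,\mathbf r_{\mathrm b}$. *)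

theory Defs
  imports "Jordan_Normal_Form.Spectral_Radius" "Jordan_Normal_Form.Gauss_Jordan_Elimination"
begin

text \<open>Edges of the bipartite subgraph are indexed 0..b-1. fac e is the index of the
indirect factor node incident to edge e, var e the index of the variable node.
c e is the Jacobian coefficient on edge e, rm i the residual r_i of factor f_i,
lam s and mu s are the inverse variance and the mean of the message from the
singly-connected factor node attached to variable node s, vs e the limit variance
of the factor-to-variable message on edge e.\<close>

definition diag_inv :: "nat \<Rightarrow> (nat \<Rightarrow> real) \<Rightarrow> real mat" where
  "diag_inv b f = mat_diag b (\<lambda>e. 1 / f e)"

definition Cmat :: "nat \<Rightarrow> (nat \<Rightarrow> real) \<Rightarrow> real mat" where
  "Cmat b c = mat_diag b c"

definition Pimat :: "nat \<Rightarrow> (nat \<Rightarrow> nat) \<Rightarrow> real mat" where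
  "Pimat b fac = mat b b (\<lambda>(e, e'). if fac e = fac e' \<and> e \<noteq> e' then 1 else 0)"

definition Dmat :: "nat \<Rightarrow> (nat \<Rightarrow> nat) \<Rightarrow> (nat \<Rightarrow> real) \<Rightarrow> real mat" where
  "Dmat b fac c = diag_inv b c * Pimat b fac * Cmat b c"

definition Gammat :: "nat \<Rightarrow> (nat \<Rightarrow> nat) \<Rightarrow> (nat \<Rightarrow> nat) \<Rightarrow> real mat" where
  "Gammat b fac var = mat b b (\<lambda>(e, e'). if fac e \<noteq> fac e' \<and> var e = var e' then 1 else 0)"

definition Lmat :: "nat \<Rightarrow> (nat \<Rightarrow> nat) \<Rightarrow> (nat \<Rightarrow> real) \<Rightarrow> real mat" where
  "Lmat b var lam = mat_diag b (\<lambda>e. lam (var e))"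

definition Ahat :: "nat \<Rightarrow> (nat \<Rightarrow> nat) \<Rightarrow> (nat \<Rightarrow> nat) \<Rightarrow> (nat \<Rightarrow> real) \<Rightarrow> (nat \<Rightarrow> real) \<Rightarrow> real mat" where
  "Ahat b fac var lam vs =
     Gammat b fac var * diag_inv b vs * transpose_mat (Gammat b fac var) + Lmat b var lam"

definition diag_part :: "real mat \<Rightarrow> real mat" where
  "diag_part A = mat_diag (dim_row A) (\<lambda>e. A $$ (e, e))"

definition Omega :: "nat \<Rightarrow> (nat \<Rightarrow> nat) \<Rightarrow> (nat \<Rightarrow> nat) \<Rightarrow> (nat \<Rightarrow> real) \<Rightarrow> (nat \<Rightarrow> real)
    \<Rightarrow> (nat \<Rightarrow> real) \<Rightarrow> real mat" where
  "Omega b fac var c lam vs =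
     Dmat b fac c * the (mat_inverse (diag_part (Ahat b fac var lam vs)))
       * Gammat b fac var * diag_inv b vs"

definition rtilde :: "nat \<Rightarrow> (nat \<Rightarrow> nat) \<Rightarrow> (nat \<Rightarrow> nat) \<Rightarrow> (nat \<Rightarrow> real) \<Rightarrow> (nat \<Rightarrow> real)
    \<Rightarrow> (nat \<Rightarrow> real) \<Rightarrow> (nat \<Rightarrow> real) \<Rightarrow> (nat \<Rightarrow> real) \<Rightarrow> real vec" where
  "rtilde b fac var c rm lam mu vs =
     diag_inv b c *\<^sub>v vec b (\<lambda>e. rm (fac e))
     - (Dmat b fac c * the (mat_inverse (diag_part (Ahat b fac var lam vs))) * Lmat b var lam)
         *\<^sub>v vec b (\<lambda>e. mu (var e))"

definition affine_iter :: "real vec \<Rightarrow> real mat \<Rightarrow> real vec \<Rightarrow> nat \<Rightarrow> real vec" where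
  "affine_iter r W x0 \<tau> = ((\<lambda>x. r - W *\<^sub>v x) ^^ \<tau>) x0"

definition vec_conv :: "nat \<Rightarrow> (nat \<Rightarrow> real vec) \<Rightarrow> real vec \<Rightarrow> bool" where
  "vec_conv b X L = (\<forall>i<b. (\<lambda>\<tau>. X \<tau> $ i) \<longlonglongrightarrow> L $ i)"

end

theory Submission
  imports Defs
begin

(*
  The damped iteration is the affine map x \<mapsto> rbar - \<Omega>bar x, whose error after k steps is
  (-\<Omega>bar)^k applied to the initial error. Global convergence to a unique fixed point is therefore
  equivalent to \<Omega>bar^k a \<longrightarrow> 0 for every real vector a, i.e. to \<rho>(\<Omega>bar) < 1: an eigenvalue of
  modulus \<ge> 1 makes the real or imaginary part of its eigenvector a non-decaying error, and
  conversely for \<rho>(\<Omega>bar) < s < 1 the powers of \<Omega>bar/s stay bounded (Jordan normal form).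

  For the limit, put P = Q + \<alpha>2 R = diag(1 - \<alpha>1 q). Then rbar = P rt and I + \<Omega>bar = P (I + \<Omega>),
  so (I + \<Omega>)^-1 rt solves the damped fixed-point equation; invertibility of I + \<Omega> follows from
  that of I + \<Omega>bar.
*)

lemma index_mult_mat_vec_eq_sum:
  assumes "A \<in> carrier_mat nr n" and "v \<in> carrier_vec n" and "i < nr"
  shows "(A *\<^sub>v v) $ i = (\<Sum>j<n. A $$ (i, j) * v $ j)"
  using assms by (simp add: scalar_prod_def atLeast0LessThan)

lemma smult_mat_mult_vec:
  assumes "A \<in> carrier_mat nr nc" and "v \<in> carrier_vec nc"
  shows "(c \<cdot>\<^sub>m A) *\<^sub>v v = c \<cdot>\<^sub>v (A *\<^sub>v v)"
  using assms by (intro eq_vecI) (auto simp: scalar_prod_def sum_distrib_left ac_simps)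

lemma pow_mat_smult:
  fixes c :: "'a :: comm_semiring_1"
  assumes A: "A \<in> carrier_mat n n"
  shows "(c \<cdot>\<^sub>m A) ^\<^sub>m k = c ^ k \<cdot>\<^sub>m A ^\<^sub>m k"
proof (induction k)
  case (Suc k)
  have "(c \<cdot>\<^sub>m A) ^\<^sub>m Suc k = (c ^ k \<cdot>\<^sub>m A ^\<^sub>m k) * (c \<cdot>\<^sub>m A)"
    by (simp add: Suc)
  also have "\<dots> = c ^ Suc k \<cdot>\<^sub>m A ^\<^sub>m Suc k"
    using A by (intro eq_matI) (auto simp: scalar_prod_def sum_distrib_left ac_simps intro!: sum.cong)
  finally show ?case .
qed (use A in auto)

lemma mat_inverse_eq_SomeE:
  fixes A :: "'a :: field mat"
  assumes A: "A \<in> carrier_mat n n" and det: "det A \<noteq> 0"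
  obtains B where "mat_inverse A = Some B" "A * B = 1\<^sub>m n" "B * A = 1\<^sub>m n" "B \<in> carrier_mat n n"
proof -
  have "A \<in> Units (ring_mat TYPE('a) n n)"
    by (rule det_non_zero_imp_unit[OF A det])
  then obtain B where "mat_inverse A = Some B"
    using mat_inverse(1)[OF A] by fastforce
  with mat_inverse(2)[OF A this] that show ?thesis by blast
qed

lemma spectral_radius_smult_le:
  fixes A :: "complex mat"
  assumes A: "A \<in> carrier_mat n n" and n: "0 < n" and c: "c \<noteq> 0"
  shows "spectral_radius (c \<cdot>\<^sub>m A) \<le> cmod c * spectral_radius A"
proof -
  have cA: "c \<cdot>\<^sub>m A \<in> carrier_mat n n" using A by simp
  obtain ev where ev: "ev \<in> spectrum (c \<cdot>\<^sub>m A)" "cmod ev = spectral_radius (c \<cdot>\<^sub>m A)"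
    using spectral_radius_mem_max(1)[OF cA n] by auto
  then obtain v where v: "eigenvector (c \<cdot>\<^sub>m A) v ev"
    unfolding spectrum_def eigenvalue_def by auto
  hence "c \<cdot>\<^sub>v (A *\<^sub>v v) = ev \<cdot>\<^sub>v v" and vc: "v \<in> carrier_vec n" "v \<noteq> 0\<^sub>v n"
    using A smult_mat_mult_vec[OF A] unfolding eigenvector_def by auto
  hence "A *\<^sub>v v = (ev / c) \<cdot>\<^sub>v v"
    using c by (metis smult_smult_assoc one_smult_vec divide_inverse_commute
        mult.commute right_inverse)
  hence "eigenvector A v (ev / c)"
    using vc A unfolding eigenvector_def by auto
  hence "ev / c \<in> spectrum A"
    unfolding spectrum_def eigenvalue_def by blast
  hence "cmod (ev / c) \<le> spectral_radius A"
    by (intro spectral_radius_mem_max(2)[OF A n] imageI)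
  thus ?thesis using ev c by (simp add: norm_divide field_simps)
qed

lemma norm_mult_mat_vec_le:
  fixes M :: "'a :: {real_normed_field} mat"
  assumes M: "M \<in> carrier_mat n n" and C: "norm_bound M C" and v: "v \<in> carrier_vec n" and i: "i < n"
  shows "norm ((M *\<^sub>v v) $ i) \<le> C * (\<Sum>j<n. norm (v $ j))"
proof -
  have "norm ((M *\<^sub>v v) $ i) = norm (\<Sum>j<n. M $$ (i, j) * v $ j)"
    by (simp add: index_mult_mat_vec_eq_sum[OF M v i])
  also have "\<dots> \<le> (\<Sum>j<n. norm (M $$ (i, j)) * norm (v $ j))"
    by (rule order_trans[OF norm_sum]) (simp add: norm_mult)
  also have "\<dots> \<le> (\<Sum>j<n. C * norm (v $ j))"
    using M C i unfolding norm_bound_def by (intro sum_mono mult_right_mono) auto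
  finally show ?thesis by (simp add: sum_distrib_left)
qed

lemma mat_pow_mult_vec_tendsto_0:
  fixes A :: "complex mat"
  assumes A: "A \<in> carrier_mat n n" and rho: "spectral_radius A < 1"
    and v: "v \<in> carrier_vec n" and i: "i < n"
  shows "(\<lambda>k. (A ^\<^sub>m k *\<^sub>v v) $ i) \<longlonglongrightarrow> 0"
proof -
  have n: "0 < n" using i by simp
  have rho_nonneg: "0 \<le> spectral_radius A"
    using spectral_radius_mem_max(1)[OF A n] by auto
  define s where "s = (spectral_radius A + 1) / 2"
  have s: "0 < s" "s < 1" "spectral_radius A < s"
    using rho rho_nonneg by (auto simp: s_def)
  define B where "B = complex_of_real (1 / s) \<cdot>\<^sub>m A"
  have B: "B \<in> carrier_mat n n" using A by (simp add: B_def)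
  have "spectral_radius B \<le> spectral_radius A / s"
    using spectral_radius_smult_le[OF A n, of "complex_of_real (1 / s)"] s by (simp add: B_def norm_divide)
  also have "\<dots> < 1" using s by simp
  finally obtain C where C: "\<And>k. norm_bound (B ^\<^sub>m k) C"
    using spectral_radius_jnf_norm_bound_less_1_upper_triangular[OF B] by blast
  have "A = complex_of_real s \<cdot>\<^sub>m B"
    using A s by (intro eq_matI) (auto simp: B_def)
  hence "A ^\<^sub>m k = complex_of_real s ^ k \<cdot>\<^sub>m B ^\<^sub>m k" for k
    by (simp add: pow_mat_smult[OF B])
  hence "norm ((A ^\<^sub>m k *\<^sub>v v) $ i) = s ^ k * norm ((B ^\<^sub>m k *\<^sub>v v) $ i)" for k
    using B v i s by (simp add: smult_mat_mult_vec[of _ n n] norm_mult norm_power)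
  also have "\<dots> k \<le> s ^ k * (C * (\<Sum>j<n. norm (v $ j)))" for k
    using norm_mult_mat_vec_le[OF pow_carrier_mat[OF B] C v i] s by (simp add: mult_left_mono)
  finally have bound: "norm ((A ^\<^sub>m k *\<^sub>v v) $ i) \<le> norm (s ^ k) * (C * (\<Sum>j<n. norm (v $ j)))" for k
    using s by simp
  have "(\<lambda>k. s ^ k) \<longlonglongrightarrow> 0"
    using s by (intro LIMSEQ_power_zero) simp
  thus ?thesis
    by (rule tendsto_0_le[where K = "C * (\<Sum>j<n. norm (v $ j))"]) (use bound in simp)
qed

lemma spectral_radius_less_1_if_mat_pow_mult_vec_tendsto_0:
  fixes N :: "real mat"
  assumes N: "N \<in> carrier_mat n n" and n: "0 < n"
    and lim: "\<And>a i. a \<in> carrier_vec n \<Longrightarrow> i < n \<Longrightarrow> (\<lambda>k. (N ^\<^sub>m k *\<^sub>v a) $ i) \<longlonglongrightarrow> 0"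
  shows "spectral_radius (map_mat complex_of_real N) < 1"
proof (rule ccontr)
  let ?N = "map_mat complex_of_real N"
  assume "\<not> spectral_radius ?N < 1"
  moreover obtain ev where ev: "ev \<in> spectrum ?N" "cmod ev = spectral_radius ?N"
    using spectral_radius_mem_max(1)[of ?N n] N n by auto
  ultimately have ev_ge: "1 \<le> cmod ev" by simp
  from ev(1) obtain v where "eigenvector ?N v ev"
    unfolding spectrum_def eigenvalue_def by auto
  hence v: "v \<in> carrier_vec n" "v \<noteq> 0\<^sub>v n" and pow: "?N ^\<^sub>m k *\<^sub>v v = ev ^ k \<cdot>\<^sub>v v" for k
    using eigenvector_pow[of ?N n] N unfolding eigenvector_def by auto
  obtain j where j: "j < n" "v $ j \<noteq> 0"
    using v by (metis carrier_vecD eq_vecI index_zero_vec)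
  define a where "a = vec n (\<lambda>l. Re (v $ l))"
  define b where "b = vec n (\<lambda>l. Im (v $ l))"
  have ab: "a \<in> carrier_vec n" "b \<in> carrier_vec n" by (simp_all add: a_def b_def)
  have "(?N ^\<^sub>m k *\<^sub>v v) $ j
      = complex_of_real ((N ^\<^sub>m k *\<^sub>v a) $ j) + \<i> * complex_of_real ((N ^\<^sub>m k *\<^sub>v b) $ j)" for k
  proof -
    have Nk: "N ^\<^sub>m k \<in> carrier_mat n n" using N by simp
    have "(?N ^\<^sub>m k *\<^sub>v v) $ j = (\<Sum>l<n. complex_of_real ((N ^\<^sub>m k) $$ (j, l)) * v $ l)"
      unfolding of_real_hom.mat_hom_pow[OF N, symmetric]
      by (subst index_mult_mat_vec_eq_sum[OF _ v(1) j(1)]) (use N j in \<open>auto intro!: sum.cong\<close>)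
    also have "\<dots> = (\<Sum>l<n. complex_of_real ((N ^\<^sub>m k) $$ (j, l) * a $ l)
                      + \<i> * complex_of_real ((N ^\<^sub>m k) $$ (j, l) * b $ l))"
      by (intro sum.cong refl) (simp add: a_def b_def complex_eq_iff)
    also have "\<dots> = complex_of_real ((N ^\<^sub>m k *\<^sub>v a) $ j) + \<i> * complex_of_real ((N ^\<^sub>m k *\<^sub>v b) $ j)"
      using Nk j ab
      by (simp add: index_mult_mat_vec_eq_sum sum.distrib sum_distrib_left)
    finally show ?thesis .
  qed
  moreover have "(\<lambda>k. complex_of_real ((N ^\<^sub>m k *\<^sub>v a) $ j) + \<i> * complex_of_real ((N ^\<^sub>m k *\<^sub>v b) $ j))
      \<longlonglongrightarrow> complex_of_real 0 + \<i> * complex_of_real 0"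
    by (intro tendsto_intros lim ab j(1))
  ultimately have "(\<lambda>k. ev ^ k * v $ j) \<longlonglongrightarrow> 0"
    using pow v(1) j(1) by simp
  hence "(\<lambda>k. cmod (ev ^ k * v $ j)) \<longlonglongrightarrow> 0"
    by (simp add: tendsto_norm_zero)
  moreover have "cmod (v $ j) \<le> cmod (ev ^ k * v $ j)" for k
    using ev_ge by (simp add: norm_mult norm_power mult_le_cancel_right1)
  ultimately have "cmod (v $ j) \<le> 0"
    by (intro LIMSEQ_le_const) auto
  thus False using j by simp
qed

lemma mat_pow_mult_vec_tendsto_0_iff:
  fixes N :: "real mat"
  assumes N: "N \<in> carrier_mat n n" and n: "0 < n"
  shows "(\<forall>a\<in>carrier_vec n. \<forall>i<n. (\<lambda>k. (N ^\<^sub>m k *\<^sub>v a) $ i) \<longlonglongrightarrow> 0)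
    \<longleftrightarrow> spectral_radius (map_mat complex_of_real N) < 1"
proof
  assume "\<forall>a\<in>carrier_vec n. \<forall>i<n. (\<lambda>k. (N ^\<^sub>m k *\<^sub>v a) $ i) \<longlonglongrightarrow> 0"
  then show "spectral_radius (map_mat complex_of_real N) < 1"
    by (intro spectral_radius_less_1_if_mat_pow_mult_vec_tendsto_0[OF N n]) auto
next
  assume rho: "spectral_radius (map_mat complex_of_real N) < 1"
  show "\<forall>a\<in>carrier_vec n. \<forall>i<n. (\<lambda>k. (N ^\<^sub>m k *\<^sub>v a) $ i) \<longlonglongrightarrow> 0"
  proof (intro ballI allI impI)
    fix a :: "real vec" and i assume a: "a \<in> carrier_vec n" and i: "i < n"
    have "complex_of_real ((N ^\<^sub>m k *\<^sub>v a) $ i)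
        = (map_mat complex_of_real N ^\<^sub>m k *\<^sub>v map_vec complex_of_real a) $ i" for k
      using N a i by (simp add: of_real_hom.mat_hom_pow[OF N, symmetric]
          of_real_hom.mult_mat_vec_hom[of _ n n, symmetric])
    moreover have "(\<lambda>k. (map_mat complex_of_real N ^\<^sub>m k *\<^sub>v map_vec complex_of_real a) $ i) \<longlonglongrightarrow> 0"
      using N a i rho by (intro mat_pow_mult_vec_tendsto_0) auto
    ultimately show "(\<lambda>k. (N ^\<^sub>m k *\<^sub>v a) $ i) \<longlonglongrightarrow> 0"
      by (simp add: tendsto_of_real_iff[where 'a = complex, symmetric])
  qed
qed

lemma det_one_plus_neq_0_if_spectral_radius_less_1:
  fixes W :: "real mat"
  assumes W: "W \<in> carrier_mat n n" and rho: "spectral_radius (map_mat complex_of_real W) < 1"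
  shows "det (1\<^sub>m n + W) \<noteq> 0"
proof
  assume "det (1\<^sub>m n + W) = 0"
  moreover have "char_matrix W (-1) = 1\<^sub>m n + W"
    using W unfolding char_matrix_def by (intro eq_matI) auto
  ultimately have ev: "eigenvalue W (-1)"
    using eigenvalue_det[OF W] by simp
  have "-1 \<in> spectrum (map_mat complex_of_real W)"
    using of_real_hom.eigenvalue_hom[OF W ev] unfolding spectrum_def by simp
  hence "cmod (-1) \<le> spectral_radius (map_mat complex_of_real W)"
    using W eigenvalue_imp_nonzero_dim[OF W ev] by (intro spectral_radius_mem_max(2) imageI) auto
  with rho show False by simp
qed

lemma affine_iter_Suc: "affine_iter r W x0 (Suc k) = affine_iter r W (r - W *\<^sub>v x0) k"
  by (simp add: affine_iter_def funpow_Suc_right del: funpow.simps)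

lemma affine_iter_minus_fixpoint:
  fixes W :: "real mat"
  assumes W: "W \<in> carrier_mat n n" and r: "r \<in> carrier_vec n"
    and rd: "rd \<in> carrier_vec n" "rd = r - W *\<^sub>v rd" and x0: "x0 \<in> carrier_vec n"
  shows "affine_iter r W x0 k - rd = (-1) ^ k \<cdot>\<^sub>v (W ^\<^sub>m k *\<^sub>v (x0 - rd))"
  using x0
proof (induction k arbitrary: x0)
  case 0
  then show ?case using rd W by (simp add: affine_iter_def)
next
  case (Suc k)
  define x1 where "x1 = r - W *\<^sub>v x0"
  have x1: "x1 \<in> carrier_vec n" using W by (intro carrier_vecI) (simp add: x1_def)
  have "x1 - rd = (-1) \<cdot>\<^sub>v (W *\<^sub>v (x0 - rd))"
  proof (rule eq_vecI)
    fix i assume "i < dim_vec ((-1) \<cdot>\<^sub>v (W *\<^sub>v (x0 - rd)))"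
    hence i: "i < n" using W by simp
    have "rd $ i = r $ i - (W *\<^sub>v rd) $ i"
      using arg_cong[OF rd(2), of "\<lambda>v. v $ i"] i W by simp
    thus "(x1 - rd) $ i = ((-1) \<cdot>\<^sub>v (W *\<^sub>v (x0 - rd))) $ i"
      using i W r rd(1) Suc.prems
      by (simp add: x1_def mult_minus_distrib_mat_vec[OF W Suc.prems rd(1)])
  qed (use W rd in simp)
  hence "affine_iter r W x0 (Suc k) - rd = (-1) ^ k \<cdot>\<^sub>v (W ^\<^sub>m k *\<^sub>v ((-1) \<cdot>\<^sub>v (W *\<^sub>v (x0 - rd))))"
    using Suc.IH[OF x1] by (simp add: affine_iter_Suc x1_def)
  also have "\<dots> = (-1) ^ Suc k \<cdot>\<^sub>v (W ^\<^sub>m Suc k *\<^sub>v (x0 - rd))"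
    using W rd(1) Suc.prems
    by (simp add: mult_mat_vec[of _ n n] assoc_mult_mat_vec[of _ n n _ n] smult_smult_assoc)
  finally show ?case .
qed

lemma affine_iter_tendsto_fixpoint_iff:
  fixes W :: "real mat"
  assumes W: "W \<in> carrier_mat n n" and r: "r \<in> carrier_vec n"
    and rd: "rd \<in> carrier_vec n" "rd = r - W *\<^sub>v rd" and x0: "x0 \<in> carrier_vec n" and i: "i < n"
  shows "(\<lambda>k. affine_iter r W x0 k $ i) \<longlonglongrightarrow> rd $ i
    \<longleftrightarrow> (\<lambda>k. (W ^\<^sub>m k *\<^sub>v (x0 - rd)) $ i) \<longlonglongrightarrow> 0"
proof -
  have dist: "\<bar>affine_iter r W x0 k $ i - rd $ i\<bar> = \<bar>(W ^\<^sub>m k *\<^sub>v (x0 - rd)) $ i\<bar>" for k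
    using arg_cong[OF affine_iter_minus_fixpoint[OF W r rd x0, of k], of "\<lambda>v. v $ i"] W rd(1) x0 i
    by (simp add: abs_mult power_abs)
  have "(\<lambda>k. affine_iter r W x0 k $ i) \<longlonglongrightarrow> rd $ i
      \<longleftrightarrow> (\<lambda>k. \<bar>affine_iter r W x0 k $ i - rd $ i\<bar>) \<longlonglongrightarrow> 0"
    unfolding tendsto_rabs_zero_iff LIM_zero_iff ..
  also have "\<dots> \<longleftrightarrow> (\<lambda>k. (W ^\<^sub>m k *\<^sub>v (x0 - rd)) $ i) \<longlonglongrightarrow> 0"
    unfolding dist tendsto_rabs_zero_iff ..
  finally show ?thesis .
qed

lemma affine_fixpoint_iff:
  fixes W :: "'a :: comm_ring_1 mat"
  assumes W: "W \<in> carrier_mat n n" and r: "r \<in> carrier_vec n" and y: "y \<in> carrier_vec n"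
  shows "y = r - W *\<^sub>v y \<longleftrightarrow> (1\<^sub>m n + W) *\<^sub>v y = r"
proof -
  have "(1\<^sub>m n + W) *\<^sub>v y = y + W *\<^sub>v y"
    using W y by (simp add: add_mult_distrib_mat_vec[of _ n n])
  thus ?thesis
    using W r y by (auto simp: vec_eq_iff algebra_simps)
qed

lemma affine_iter_converges_iff_spectral_radius_less_1:
  fixes W :: "real mat"
  assumes W: "W \<in> carrier_mat n n" and r: "r \<in> carrier_vec n" and n: "0 < n"
  shows "(\<exists>rd \<in> carrier_vec n. rd = r - W *\<^sub>v rd
            \<and> (\<forall>y \<in> carrier_vec n. y = r - W *\<^sub>v y \<longrightarrow> y = rd)
            \<and> (\<forall>x0 \<in> carrier_vec n. vec_conv n (affine_iter r W x0) rd))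
    \<longleftrightarrow> spectral_radius (map_mat complex_of_real W) < 1"
  (is "?conv \<longleftrightarrow> ?rho")
proof
  assume ?conv
  then obtain rd where rd: "rd \<in> carrier_vec n" "rd = r - W *\<^sub>v rd"
    and conv: "\<And>x0. x0 \<in> carrier_vec n \<Longrightarrow> vec_conv n (affine_iter r W x0) rd"
    by blast
  have "(\<lambda>k. (W ^\<^sub>m k *\<^sub>v a) $ i) \<longlonglongrightarrow> 0" if a: "a \<in> carrier_vec n" and i: "i < n" for a i
  proof -
    have x0: "rd + a \<in> carrier_vec n" and "rd + a - rd = a"
      using rd(1) a by auto
    with conv[OF x0] i affine_iter_tendsto_fixpoint_iff[OF W r rd x0 i]
    show ?thesis unfolding vec_conv_def by simp
  qed
  thus ?rho
    using mat_pow_mult_vec_tendsto_0_iff[OF W n] by blast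
next
  assume rho: ?rho
  have I: "1\<^sub>m n + W \<in> carrier_mat n n" using W by simp
  obtain B where B: "(1\<^sub>m n + W) * B = 1\<^sub>m n" "B * (1\<^sub>m n + W) = 1\<^sub>m n" "B \<in> carrier_mat n n"
    using mat_inverse_eq_SomeE[OF I det_one_plus_neq_0_if_spectral_radius_less_1[OF W rho]] by metis
  define rd where "rd = B *\<^sub>v r"
  have rd_carrier: "rd \<in> carrier_vec n" using B(3) r by (simp add: rd_def)
  have "(1\<^sub>m n + W) *\<^sub>v rd = r"
    using B r I by (simp add: rd_def assoc_mult_mat_vec[symmetric, of _ n n _ n])
  hence fix_rd: "rd = r - W *\<^sub>v rd" using affine_fixpoint_iff[OF W r rd_carrier] by simp
  have "y = rd" if y: "y \<in> carrier_vec n" "y = r - W *\<^sub>v y" for y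
  proof -
    have "y = B *\<^sub>v ((1\<^sub>m n + W) *\<^sub>v y)"
      using B y I by (simp add: assoc_mult_mat_vec[symmetric, of _ n n _ n])
    thus ?thesis using affine_fixpoint_iff[OF W r y(1)] y(2) by (simp add: rd_def)
  qed
  moreover have "vec_conv n (affine_iter r W x0) rd" if x0: "x0 \<in> carrier_vec n" for x0
    unfolding vec_conv_def
    using affine_iter_tendsto_fixpoint_iff[OF W r rd_carrier fix_rd x0]
      mat_pow_mult_vec_tendsto_0_iff[OF W n] rho x0 rd_carrier by simp
  ultimately show ?conv
    using rd_carrier fix_rd by blast
qed

lemma Omega_carrier: "Omega b fac var c lam vs \<in> carrier_mat b b"
  unfolding Omega_def Dmat_def diag_inv_def by (intro carrier_matI) (simp_all add: mat_diag_def)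

lemma rtilde_carrier: "rtilde b fac var c rm lam mu vs \<in> carrier_vec b"
  unfolding rtilde_def Dmat_def diag_inv_def carrier_vec_def by (simp add: mat_diag_def)

lemma damped_iteration_matrices:
  fixes q :: "nat \<Rightarrow> real" and \<alpha>1 \<alpha>2 :: real
  assumes \<Omega>: "\<Omega> \<in> carrier_mat b b" and a2: "\<alpha>2 = 1 - \<alpha>1"
  defines "Q \<equiv> mat_diag b (\<lambda>e. 1 - q e)" and "R \<equiv> mat_diag b q"
    and "P \<equiv> mat_diag b (\<lambda>e. 1 - \<alpha>1 * q e)"
  shows "Q + \<alpha>2 \<cdot>\<^sub>m R = P"
    and "1\<^sub>m b + (Q * \<Omega> + \<alpha>2 \<cdot>\<^sub>m (R * \<Omega>) - \<alpha>1 \<cdot>\<^sub>m R) = P * (1\<^sub>m b + \<Omega>)"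
    and "Q * \<Omega> + \<alpha>2 \<cdot>\<^sub>m (R * \<Omega>) - \<alpha>1 \<cdot>\<^sub>m R \<in> carrier_mat b b"
proof -
  show "Q + \<alpha>2 \<cdot>\<^sub>m R = P"
    by (intro eq_matI) (auto simp: Q_def R_def P_def mat_diag_def a2 algebra_simps)
  show "1\<^sub>m b + (Q * \<Omega> + \<alpha>2 \<cdot>\<^sub>m (R * \<Omega>) - \<alpha>1 \<cdot>\<^sub>m R) = P * (1\<^sub>m b + \<Omega>)"
    using \<Omega> unfolding Q_def R_def P_def mat_diag_mult_left[OF \<Omega>] mat_diag_mult_left[OF add_carrier_mat[OF \<Omega>]]
    by (intro eq_matI) (auto simp: mat_diag_def a2 algebra_simps)
  show "Q * \<Omega> + \<alpha>2 \<cdot>\<^sub>m (R * \<Omega>) - \<alpha>1 \<cdot>\<^sub>m R \<in> carrier_mat b b"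
    unfolding R_def by (intro minus_carrier_mat smult_carrier_mat mat_diag_dim)
qed

lemma inverse_one_plus_solves_scaled_fixpoint_equation:
  fixes W \<Omega> P :: "real mat"
  assumes W: "W \<in> carrier_mat n n" and \<Omega>: "\<Omega> \<in> carrier_mat n n" and P: "P \<in> carrier_mat n n"
    and r: "r \<in> carrier_vec n"
    and scaled: "1\<^sub>m n + W = P * (1\<^sub>m n + \<Omega>)" and rho: "spectral_radius (map_mat complex_of_real W) < 1"
  obtains B where "mat_inverse (1\<^sub>m n + \<Omega>) = Some B" "B *\<^sub>v r \<in> carrier_vec n"
    "B *\<^sub>v r = P *\<^sub>v r - W *\<^sub>v (B *\<^sub>v r)"
proof -
  have I: "1\<^sub>m n + \<Omega> \<in> carrier_mat n n" using \<Omega> by simp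
  have "det (1\<^sub>m n + \<Omega>) \<noteq> 0"
    using det_one_plus_neq_0_if_spectral_radius_less_1[OF W rho] unfolding scaled det_mult[OF P I] by simp
  then obtain B where B: "mat_inverse (1\<^sub>m n + \<Omega>) = Some B" "(1\<^sub>m n + \<Omega>) * B = 1\<^sub>m n" "B \<in> carrier_mat n n"
    using mat_inverse_eq_SomeE[OF I] by metis
  have Br: "B *\<^sub>v r \<in> carrier_vec n" using B(3) r by simp
  have "(1\<^sub>m n + \<Omega>) *\<^sub>v (B *\<^sub>v r) = r"
    using B r I by (simp add: assoc_mult_mat_vec[symmetric, of _ n n _ n])
  hence "(1\<^sub>m n + W) *\<^sub>v (B *\<^sub>v r) = P *\<^sub>v r"
    unfolding scaled using B(3) P I r by (simp add: assoc_mult_mat_vec[of _ n n _ n])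
  hence "B *\<^sub>v r = P *\<^sub>v r - W *\<^sub>v (B *\<^sub>v r)"
    using affine_fixpoint_iff[OF W _ Br] P r by simp
  with B(1) Br that show ?thesis by blast
qed

theorem theorem3:
  fixes b m :: nat
    and fac var :: "nat \<Rightarrow> nat"
    and c rm lam mu vs :: "nat \<Rightarrow> real"
    and q :: "nat \<Rightarrow> real"
    and \<alpha>1 \<alpha>2 :: real
  assumes b: "b \<ge> 1"
    and fac_range: "\<forall>e<b. fac e < m"
    and fac_deg: "\<forall>i<m. \<exists>e<b. fac e = i"
    and grouped: "\<forall>e e'. e < e' \<and> e' < b \<longrightarrow> fac e \<le> fac e'"
    and simple: "\<forall>e<b. \<forall>e'<b. fac e = fac e' \<and> var e = var e' \<longrightarrow> e = e'"
    and c_nz: "\<forall>e<b. c e \<noteq> 0"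
    and lam_pos: "\<forall>e<b. lam (var e) > 0"
    and vs_pos: "\<forall>e<b. vs e > 0"
    and q01: "\<forall>e<b. q e \<in> {0, 1}"
    and a1: "0 < \<alpha>1" "\<alpha>1 < 1"
    and a2: "\<alpha>2 = 1 - \<alpha>1"
  defines "\<Omega> \<equiv> Omega b fac var c lam vs"
    and "rt \<equiv> rtilde b fac var c rm lam mu vs"
    and "Q \<equiv> mat_diag b (\<lambda>e. 1 - q e)"
    and "R \<equiv> mat_diag b q"
  defines "rbar \<equiv> (Q + \<alpha>2 \<cdot>\<^sub>m R) *\<^sub>v rt"
    and "\<Omega>bar \<equiv> Q * \<Omega> + \<alpha>2 \<cdot>\<^sub>m (R * \<Omega>) - \<alpha>1 \<cdot>\<^sub>m R"
  defines "CONV \<equiv> (\<exists>rd \<in> carrier_vec b.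
              rd = rbar - \<Omega>bar *\<^sub>v rd
            \<and> (\<forall>y \<in> carrier_vec b. y = rbar - \<Omega>bar *\<^sub>v y \<longrightarrow> y = rd)
            \<and> (\<forall>x0 \<in> carrier_vec b. vec_conv b (affine_iter rbar \<Omega>bar x0) rd))"
  shows "(CONV \<longleftrightarrow> spectral_radius (map_mat complex_of_real \<Omega>bar) < 1)
       \<and> (CONV \<longrightarrow> mat_inverse (1\<^sub>m b + \<Omega>) \<noteq> None
             \<and> (\<forall>x0 \<in> carrier_vec b.
                   vec_conv b (affine_iter rbar \<Omega>bar x0) (the (mat_inverse (1\<^sub>m b + \<Omega>)) *\<^sub>v rt)))"
proof -
  have \<Omega>_carrier: "\<Omega> \<in> carrier_mat b b" and rt_carrier: "rt \<in> carrier_vec b"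
    unfolding \<Omega>_def rt_def by (rule Omega_carrier, rule rtilde_carrier)
  define P where "P = mat_diag b (\<lambda>e. 1 - \<alpha>1 * q e)"
  have P_carrier: "P \<in> carrier_mat b b" by (simp add: P_def)
  note damped = damped_iteration_matrices[OF \<Omega>_carrier a2, of q, folded Q_def R_def P_def, folded \<Omega>bar_def]
  have rbar_eq: "rbar = P *\<^sub>v rt" using damped(1) by (simp add: rbar_def)
  have rbar_carrier: "rbar \<in> carrier_vec b" using P_carrier rt_carrier by (simp add: rbar_eq)
  have conv_iff: "CONV \<longleftrightarrow> spectral_radius (map_mat complex_of_real \<Omega>bar) < 1"
    unfolding CONV_def using affine_iter_converges_iff_spectral_radius_less_1[OF damped(3) rbar_carrier] b
    by simp
  moreover have "mat_inverse (1\<^sub>m b + \<Omega>) \<noteq> None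
      \<and> (\<forall>x0 \<in> carrier_vec b. vec_conv b (affine_iter rbar \<Omega>bar x0) (the (mat_inverse (1\<^sub>m b + \<Omega>)) *\<^sub>v rt))"
    if CONV
  proof -
    from \<open>CONV\<close> obtain rd where
      unique: "\<And>y. y \<in> carrier_vec b \<Longrightarrow> y = rbar - \<Omega>bar *\<^sub>v y \<Longrightarrow> y = rd"
      and conv: "\<And>x0. x0 \<in> carrier_vec b \<Longrightarrow> vec_conv b (affine_iter rbar \<Omega>bar x0) rd"
      unfolding CONV_def by blast
    obtain B where B: "mat_inverse (1\<^sub>m b + \<Omega>) = Some B" "B *\<^sub>v rt \<in> carrier_vec b"
        "B *\<^sub>v rt = rbar - \<Omega>bar *\<^sub>v (B *\<^sub>v rt)"
      using inverse_one_plus_solves_scaled_fixpoint_equation[OF damped(3) \<Omega>_carrier P_carrier rt_carrier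
          damped(2)] conv_iff \<open>CONV\<close> unfolding rbar_eq by metis
    thus ?thesis using unique[OF B(2,3)] conv by simp
  qed
  ultimately show ?thesis by blast
qed

end
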